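(* Let $n \ge 2$, $b \in \{1,\ldots,n\}$, and let $\alpha_1,\ldots,\alpha_n$ be real numbers with $0 \le \alpha_i \le \alpha_j$ for $1 \le i \le j \le b$ and $\alpha_i = \alpha_j \le 0$ for all $i,j > b$. Consider the problem of minimizing $f(x)=x_1^{\alpha_1}\cdots x_n^{\alpha_n}$ over $\mathcal{X}^n$. Then: (a) there exists a minimizer belonging to $\mathcal{Y}^n$; (b) if $\alpha_i \ne 0$ for all $i$, then every minimizer belongs to $\mathcal{Y}^n$; (c) if $b = n-1$, $\alpha_i > 0$ for all $i \ne n$ and $\alpha_n = 0$, then every minimizer belongs to $\mathcal{Y}^n$.
   Context: The Sylvester sequence: $s_1 = 2$, $s_i = \prod_{j=1}^{i-1} s_j + 1$ for $i\ge2$. $\mathcal{X}^n$ is the set of $x\in\mathbb{R}^n$ with $x_1+\cdots+x_n = 1$, $1 \ge x_1 \ge \cdots \ge x_n \ge 0$, and $x_1\cdots x_j \le x_{j+1}+\cdots+x_n$ for all $j\in\{1,\ldots,n-1\}$ (all coordinates of elements of $\mathcal{X}^n$ are positive, so $f$ is well defined). For $l\in\{1,\ldots,n\}$, $\bar x(l) := \big(\frac{1}{s_1},\ldots,\frac{1}{s_{l-1}}, \frac{1}{(n-l+1)(s_l-1)},\ldots,\frac{1}{(n-l+1)(s_l-1)}\big)\in\mathbb{R}^n$ (the last value repeated $n-l+1$ times), and $\mathcal{Y}^n := \{\bar x(l) : l = 1,\ldots,n\} \subseteq \mathcal{X}^n$. *)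

theory Defs
  imports Complex_Main
begin

text \<open>Sylvester sequence, indexed from 1: s 1 = 2, s i = (prod_{j=1}^{i-1} s j) + 1.
  (The value at index 0 is irrelevant.)\<close>
function sylv :: "nat \<Rightarrow> nat" where
  "sylv i = (if i \<le> 1 then 2 else (\<Prod>j\<in>{1..<i}. sylv j) + 1)"
  by auto
termination by (relation "measure id") auto

text \<open>Vectors in R^n are functions nat => real, coordinates 1..n.\<close>
definition Xset :: "nat \<Rightarrow> (nat \<Rightarrow> real) set" where
  "Xset n = {x. (\<Sum>i=1..n. x i) = 1 \<and> x 1 \<le> 1
     \<and> (\<forall>i\<in>{1..<n}. x (i+1) \<le> x i) \<and> 0 \<le> x n
     \<and> (\<forall>j\<in>{1..<n}. (\<Prod>i=1..j. x i) \<le> (\<Sum>i=j+1..n. x i))}"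

definition xbar :: "nat \<Rightarrow> nat \<Rightarrow> nat \<Rightarrow> real" where
  "xbar n l i = (if i < l then 1 / real (sylv i)
                 else 1 / (real (n - l + 1) * (real (sylv l) - 1)))"

definition inY :: "nat \<Rightarrow> (nat \<Rightarrow> real) \<Rightarrow> bool" where
  "inY n x = (\<exists>l\<in>{1..n}. \<forall>i\<in>{1..n}. x i = xbar n l i)"

definition fobj :: "nat \<Rightarrow> (nat \<Rightarrow> real) \<Rightarrow> (nat \<Rightarrow> real) \<Rightarrow> real" where
  "fobj n \<alpha> x = (\<Prod>i=1..n. x i powr \<alpha> i)"

definition is_minimizer :: "nat \<Rightarrow> (nat \<Rightarrow> real) \<Rightarrow> (nat \<Rightarrow> real) \<Rightarrow> bool" where
  "is_minimizer n \<alpha> x = (x \<in> Xset n \<and> (\<forall>y\<in>Xset n. fobj n \<alpha> x \<le> fobj n \<alpha> y))"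

end

theory Submission
  imports Defs
begin

(*
  Write f = exp (log_fobj n alpha) with log_fobj n alpha x = sum_i alpha_i ln x_i.  Two facts
  drive the proof.  First, the suffix sums of every x in X^n dominate those of the Sylvester point:
  x_t + ... + x_n >= 1/(s_t - 1).  Otherwise the head (x_1, ..., x_(t-1)) would majorize
  (1/s_1, ..., 1/s_(t-1)) and so have product at least 1/(s_t - 1), contradicting
  x_1 ... x_(t-1) <= x_t + ... + x_n.  Second, if a decreasing x dominates y in suffix sums, then
  sum alpha_i ln y_i <= sum alpha_i ln x_i for increasing nonnegative alpha: apply Abel summation
  with the increasing weights alpha_i / x_i to the tangent-line bound for ln.

  Given x in X^n, replace its coordinates beyond b by their mean c (AM-GM handles the common
  nonpositive exponent there) and choose l such that c lies between the tail values of
  xbar(l+1) and xbar(l).  The point y on the segment from xbar(l) to xbar(l+1) with tail value c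
  is dominated by x in the above sense, so f(y) <= f(x).  Along that segment ln f is concave or
  monotone, hence minimal at xbar(l) or xbar(l+1).  The strict forms of these inequalities give
  uniqueness in (b) and (c).
*)

section \<open>Sylvester numbers\<close>

declare sylv.simps [simp del]

lemma sylv_ge_2: "2 \<le> sylv i"
proof (induction i rule: less_induct)
  case (less i)
  show ?case
  proof (cases "i \<le> 1")
    case True
    then show ?thesis by (subst sylv.simps) simp
  next
    case False
    have "1 \<le> (\<Prod>j\<in>{1..<i}. sylv j)"
      by (rule prod_ge_1) (use less in force)
    with False show ?thesis by (subst sylv.simps) simp
  qed
qed

lemma sylv_pos: "0 < sylv i"
  using sylv_ge_2[of i] by simp

lemma sylv_1: "sylv (Suc 0) = 2"
  using sylv.simps[of 1] by simp

lemma sylv_Suc: "1 \<le> i \<Longrightarrow> sylv (Suc i) = sylv i * (sylv i - 1) + 1"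
proof (induction i)
  case (Suc i)
  have "sylv (Suc (Suc i)) = (\<Prod>j\<in>{1..<Suc i}. sylv j) * sylv (Suc i) + 1"
    by (subst sylv.simps) (simp add: prod.atLeastLessThan_Suc)
  moreover have "(\<Prod>j\<in>{1..<Suc i}. sylv j) = sylv (Suc i) - 1"
    by (subst (2) sylv.simps) (cases i; simp)
  ultimately show ?case by (simp add: mult.commute)
qed simp

lemma sylv_Suc_real: "1 \<le> i \<Longrightarrow> real (sylv (Suc i)) - 1 = real (sylv i) * (real (sylv i) - 1)"
  using sylv_Suc[of i] sylv_ge_2[of i] by simp

lemma sylv_real_ge_2: "2 \<le> real (sylv i)"
  using sylv_ge_2[of i] by linarith

(* the mass 1 - (1/s_1 + ... + 1/s_(l-1)) left after the first l - 1 Sylvester reciprocals *)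
definition sylv_rem :: "nat \<Rightarrow> real" where
  "sylv_rem l = 1 / (real (sylv l) - 1)"

lemma sylv_rem_pos: "0 < sylv_rem l"
  using sylv_real_ge_2[of l] by (simp add: sylv_rem_def)

lemma sylv_rem_le_1: "sylv_rem l \<le> 1"
  using sylv_real_ge_2[of l] by (simp add: sylv_rem_def)

lemma sylv_rem_1: "sylv_rem (Suc 0) = 1"
  by (simp add: sylv_rem_def sylv_1)

lemma inverse_sylv_less_sylv_rem: "1 / real (sylv l) < sylv_rem l"
  using sylv_real_ge_2[of l] by (simp add: sylv_rem_def frac_less2)

lemma sylv_rem_Suc: "1 \<le> l \<Longrightarrow> sylv_rem (Suc l) = sylv_rem l - 1 / real (sylv l)"
  using sylv_real_ge_2[of l] by (simp add: sylv_rem_def sylv_Suc_real field_simps)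

lemma sylv_rem_Suc_eq_divide: "1 \<le> l \<Longrightarrow> sylv_rem (Suc l) = sylv_rem l / real (sylv l)"
  using sylv_real_ge_2[of l] by (simp add: sylv_rem_def sylv_Suc_real field_simps)

lemma sylv_rem_Suc_le: "1 \<le> l \<Longrightarrow> sylv_rem (Suc l) \<le> 1 / real (sylv l)"
  using sylv_rem_le_1[of l] sylv_real_ge_2[of l]
  by (simp add: sylv_rem_Suc_eq_divide divide_right_mono)

lemma sum_inverse_sylv:
  "1 \<le> l \<Longrightarrow> l \<le> m \<Longrightarrow> (\<Sum>k=l..<m. 1 / real (sylv k)) = sylv_rem l - sylv_rem m"
proof (induction m)
  case (Suc m)
  then show ?case
    by (cases "l = Suc m") (simp_all add: sylv_rem_Suc)
qed simp

lemma prod_inverse_sylv: "(\<Prod>k=1..j. 1 / real (sylv k)) = sylv_rem (Suc j)"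
  by (induction j) (simp_all add: sylv_rem_1 sylv_rem_Suc_eq_divide)

section \<open>Inequalities for the logarithm\<close>

(* the error at y of the tangent line of ln at x *)
definition ln_gap :: "real \<Rightarrow> real \<Rightarrow> real" where
  "ln_gap x y = ln x - ln y - (x - y) / x"

lemma ln_gap_eq: "0 < x \<Longrightarrow> 0 < y \<Longrightarrow> ln_gap x y = y / x - 1 - ln (y / x)"
  by (simp add: ln_gap_def ln_div diff_divide_distrib)

lemma ln_gap_nonneg: "0 < x \<Longrightarrow> 0 < y \<Longrightarrow> 0 \<le> ln_gap x y"
  using ln_le_minus_one[of "y / x"] by (simp add: ln_gap_eq)

lemma ln_gap_eq_0_iff: "0 < x \<Longrightarrow> 0 < y \<Longrightarrow> ln_gap x y = 0 \<longleftrightarrow> x = y"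
  using ln_eq_minus_one[of "y / x"] by (auto simp: ln_gap_eq)

lemma ln_gap_pos: "0 < x \<Longrightarrow> 0 < y \<Longrightarrow> x \<noteq> y \<Longrightarrow> 0 < ln_gap x y"
  using ln_gap_nonneg ln_gap_eq_0_iff by force

lemma ln_gap_convex_comb:
  assumes "m = (1 - t) * a + t * c" and "m \<noteq> 0"
  shows "ln m = (1 - t) * ln a + t * ln c + ((1 - t) * ln_gap m a + t * ln_gap m c)"
proof -
  have "(1 - t) * ((m - a) / m) + t * ((m - c) / m) = 0"
    using assms by (simp add: field_simps)
  then show ?thesis
    unfolding ln_gap_def by (simp add: algebra_simps)
qed

lemma ln_sum_convex_comb_le:
  fixes p q t a b c d :: real
  assumes "0 \<le> p" "0 \<le> q" "0 < a" "0 < b" "0 < c" "0 < d" "0 \<le> t" "t \<le> 1"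
  shows "(1 - t) * (p * ln a + q * ln b) + t * (p * ln c + q * ln d)
      \<le> p * ln ((1 - t) * a + t * c) + q * ln ((1 - t) * b + t * d)"
    and "0 < p \<Longrightarrow> 0 < t \<Longrightarrow> t < 1 \<Longrightarrow> a \<noteq> c \<Longrightarrow>
      (1 - t) * (p * ln a + q * ln b) + t * (p * ln c + q * ln d)
      < p * ln ((1 - t) * a + t * c) + q * ln ((1 - t) * b + t * d)"
proof -
  define m where "m = (1 - t) * a + t * c"
  define m' where "m' = (1 - t) * b + t * d"
  have "0 < m" "0 < m'"
    using assms by (cases "t = 0"; auto simp: m_def m'_def intro: add_nonneg_pos)+
  define g where "g = (1 - t) * ln_gap m a + t * ln_gap m c"
  define g' where "g' = (1 - t) * ln_gap m' b + t * ln_gap m' d"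
  have ln_m: "ln m = (1 - t) * ln a + t * ln c + g"
    and ln_m': "ln m' = (1 - t) * ln b + t * ln d + g'"
    using \<open>0 < m\<close> \<open>0 < m'\<close> unfolding g_def g'_def m_def m'_def
    by (simp_all add: ln_gap_convex_comb)
  have sum: "p * ln m + q * ln m' = (1 - t) * (p * ln a + q * ln b) + t * (p * ln c + q * ln d)
      + (p * g + q * g')"
    unfolding ln_m ln_m' by (simp add: algebra_simps)
  have "0 \<le> g" "0 \<le> g'"
    using assms \<open>0 < m\<close> \<open>0 < m'\<close> unfolding g_def g'_def
    by (auto intro!: add_nonneg_nonneg mult_nonneg_nonneg ln_gap_nonneg)
  then show "(1 - t) * (p * ln a + q * ln b) + t * (p * ln c + q * ln d)
      \<le> p * ln ((1 - t) * a + t * c) + q * ln ((1 - t) * b + t * d)"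
    using sum assms unfolding m_def m'_def by (simp add: add_nonneg_nonneg)
  assume "0 < p" "0 < t" "t < 1" "a \<noteq> c"
  then have "m \<noteq> a"
    by (auto simp: m_def algebra_simps)
  then have "0 < g"
    using assms \<open>0 < m\<close> \<open>0 \<le> t\<close> \<open>t < 1\<close> unfolding g_def
    by (intro add_pos_nonneg mult_pos_pos mult_nonneg_nonneg ln_gap_pos ln_gap_nonneg) auto
  with \<open>0 \<le> g'\<close> \<open>0 < p\<close> assms(2) have "0 < p * g + q * g'"
    by (simp add: add_pos_nonneg)
  then show "(1 - t) * (p * ln a + q * ln b) + t * (p * ln c + q * ln d)
      < p * ln ((1 - t) * a + t * c) + q * ln ((1 - t) * b + t * d)"
    using sum unfolding m_def m'_def by linarith
qed

lemma ln_sum_mono_of_neg: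
  fixes p q u0 u e :: real
  assumes "0 \<le> p" "q < 0" "0 < u0" "u0 \<le> u" "u < e"
  shows "p * ln u0 + q * ln (e - u0) \<le> p * ln u + q * ln (e - u)"
    and "u0 < u \<Longrightarrow> p * ln u0 + q * ln (e - u0) < p * ln u + q * ln (e - u)"
proof -
  have "p * ln u0 \<le> p * ln u" "q * ln (e - u0) \<le> q * ln (e - u)"
    using assms by (auto intro: mult_left_mono mult_left_mono_neg)
  moreover have "q * ln (e - u0) < q * ln (e - u)" if "u0 < u"
    using assms that by (simp add: mult_less_cancel_left)
  ultimately show "p * ln u0 + q * ln (e - u0) \<le> p * ln u + q * ln (e - u)"
    and "u0 < u \<Longrightarrow> p * ln u0 + q * ln (e - u0) < p * ln u + q * ln (e - u)"
    by (simp_all only: add_mono add_le_less_mono)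
qed

lemma min_endpoints_le_ln_sum:
  fixes p q u0 u1 u e :: real
  assumes "0 \<le> p" and "0 < u0" "u0 \<le> u" "u \<le> u1" "u1 < e"
  shows "min (p * ln u0 + q * ln (e - u0)) (p * ln u1 + q * ln (e - u1)) \<le> p * ln u + q * ln (e - u)"
    and "0 < p \<Longrightarrow> u0 < u \<Longrightarrow> u < u1 \<Longrightarrow>
      min (p * ln u0 + q * ln (e - u0)) (p * ln u1 + q * ln (e - u1)) < p * ln u + q * ln (e - u)"
proof -
  let ?\<phi> = "\<lambda>u. p * ln u + q * ln (e - u)"
  have "min (?\<phi> u0) (?\<phi> u1) \<le> ?\<phi> u \<and> (0 < p \<and> u0 < u \<and> u < u1 \<longrightarrow> min (?\<phi> u0) (?\<phi> u1) < ?\<phi> u)"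
  proof (cases "q < 0")
    case True
    with assms have "?\<phi> u0 \<le> ?\<phi> u" and "u0 < u \<Longrightarrow> ?\<phi> u0 < ?\<phi> u"
      by (simp_all add: ln_sum_mono_of_neg)
    then show ?thesis
      by (auto simp: min_le_iff_disj min_less_iff_disj)
  next
    case False
    show ?thesis
    proof (cases "u0 = u1")
      case True
      with assms show ?thesis by simp
    next
      case False
      define t where "t = (u - u0) / (u1 - u0)"
      have t: "0 \<le> t" "t \<le> 1"
        using assms False by (auto simp: t_def divide_le_eq)
      have "t * (u1 - u0) = u - u0"
        using False by (simp add: t_def)
      then have u: "(1 - t) * u0 + t * u1 = u" "(1 - t) * (e - u0) + t * (e - u1) = e - u"
        by (simp_all add: algebra_simps)
      note concave = ln_sum_convex_comb_le[of p q u0 "e - u0" u1 "e - u1" t, unfolded u]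
      have "(1 - t) * min (?\<phi> u0) (?\<phi> u1) \<le> (1 - t) * ?\<phi> u0"
        and "t * min (?\<phi> u0) (?\<phi> u1) \<le> t * ?\<phi> u1"
        using t by (auto intro: mult_left_mono)
      then have "min (?\<phi> u0) (?\<phi> u1) \<le> (1 - t) * ?\<phi> u0 + t * ?\<phi> u1"
        by (simp add: algebra_simps)
      moreover have "(1 - t) * ?\<phi> u0 + t * ?\<phi> u1 \<le> ?\<phi> u"
        using concave(1) assms t \<open>\<not> q < 0\<close> by simp
      moreover have "(1 - t) * ?\<phi> u0 + t * ?\<phi> u1 < ?\<phi> u" if "0 < p" "u0 < u" "u < u1"
        using concave(2) assms t \<open>\<not> q < 0\<close> \<open>u0 \<noteq> u1\<close> that by (simp add: t_def)
      ultimately show ?thesis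
        by linarith
    qed
  qed
  then show "min (?\<phi> u0) (?\<phi> u1) \<le> ?\<phi> u"
    and "0 < p \<Longrightarrow> u0 < u \<Longrightarrow> u < u1 \<Longrightarrow> min (?\<phi> u0) (?\<phi> u1) < ?\<phi> u"
    by auto
qed

lemma abel_suffix_sum_le:
  fixes w d :: "nat \<Rightarrow> real"
  assumes "t \<le> Suc b"
    and mono: "\<And>i. t \<le> i \<Longrightarrow> i < b \<Longrightarrow> w i \<le> w (Suc i)"
    and suffix: "\<And>k. t < k \<Longrightarrow> k \<le> b \<Longrightarrow> 0 \<le> (\<Sum>i=k..b. d i)"
  shows "w t * (\<Sum>i=t..b. d i) \<le> (\<Sum>i=t..b. w i * d i)"
  using assms
proof (induction t rule: inc_induct)
  case (step m)
  have "w m * (\<Sum>i=Suc m..b. d i) \<le> w (Suc m) * (\<Sum>i=Suc m..b. d i)"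
    using step.prems by (cases "m < b") (auto intro: mult_right_mono)
  moreover have "w (Suc m) * (\<Sum>i=Suc m..b. d i) \<le> (\<Sum>i=Suc m..b. w i * d i)"
    using step.prems by (intro step.IH) auto
  ultimately show ?case
    using step.hyps by (simp add: sum.atLeast_Suc_atMost algebra_simps)
qed simp

lemma weighted_ln_sum_le:
  fixes x y \<alpha> :: "nat \<Rightarrow> real"
  assumes pos: "\<And>i. 1 \<le> i \<Longrightarrow> i \<le> b \<Longrightarrow> 0 < x i \<and> 0 < y i"
    and antitone: "\<And>i. 1 \<le> i \<Longrightarrow> i < b \<Longrightarrow> x (Suc i) \<le> x i"
    and nonneg: "\<And>i. 1 \<le> i \<Longrightarrow> i \<le> b \<Longrightarrow> 0 \<le> \<alpha> i"
    and mono: "\<And>i. 1 \<le> i \<Longrightarrow> i < b \<Longrightarrow> \<alpha> i \<le> \<alpha> (Suc i)"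
    and suffix: "\<And>t. 1 \<le> t \<Longrightarrow> t \<le> b \<Longrightarrow> (\<Sum>i=t..b. y i) \<le> (\<Sum>i=t..b. x i)"
  shows "(\<Sum>i=1..b. \<alpha> i * ln (y i)) + (\<Sum>i=1..b. \<alpha> i * ln_gap (x i) (y i))
    \<le> (\<Sum>i=1..b. \<alpha> i * ln (x i))"
proof -
  define w where "w i = \<alpha> i / x i" for i
  have w_mono: "w i \<le> w (Suc i)" if "1 \<le> i" "i < b" for i
  proof -
    have "\<alpha> i / x i \<le> \<alpha> (Suc i) / x i"
      using that pos[of i] mono[of i] by (intro divide_right_mono) auto
    also have "\<dots> \<le> \<alpha> (Suc i) / x (Suc i)"
      using that pos nonneg antitone by (intro divide_left_mono) auto
    finally show ?thesis unfolding w_def .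
  qed
  have suffix_diff: "0 \<le> (\<Sum>i=k..b. x i - y i)" if "1 \<le> k" "k \<le> b" for k
    using suffix[OF that] by (simp add: sum_subtractf)
  have "0 \<le> w 1 * (\<Sum>i=1..b. x i - y i)"
    using pos[of 1] nonneg[of 1] suffix_diff[of 1] by (cases "b = 0") (auto simp: w_def)
  also have "\<dots> \<le> (\<Sum>i=1..b. w i * (x i - y i))"
    using w_mono suffix_diff by (intro abel_suffix_sum_le) auto
  also have "\<dots> = (\<Sum>i=1..b. \<alpha> i * ln (x i)) - (\<Sum>i=1..b. \<alpha> i * ln (y i))
      - (\<Sum>i=1..b. \<alpha> i * ln_gap (x i) (y i))"
    unfolding sum_subtractf[symmetric]
    by (rule sum.cong) (use pos in \<open>auto simp: w_def ln_gap_def field_simps\<close>)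
  finally show ?thesis by simp
qed

lemma sum_ln_add_ln_gap_mean:
  fixes x :: "nat \<Rightarrow> real"
  assumes "finite A" "A \<noteq> {}" "\<And>i. i \<in> A \<Longrightarrow> 0 < x i"
  shows "(\<Sum>i\<in>A. ln (x i)) + (\<Sum>i\<in>A. ln_gap (sum x A / card A) (x i))
    = card A * ln (sum x A / card A)"
proof -
  define c where "c = sum x A / card A"
  have "0 < sum x A" using assms by (intro sum_pos) auto
  then have "0 < c" using assms by (simp add: c_def card_gt_0_iff)
  have "(\<Sum>i\<in>A. (c - x i) / c) = (card A * c - sum x A) / c"
    by (simp add: sum_divide_distrib[symmetric] sum_subtractf)
  also have "\<dots> = 0" using assms by (simp add: c_def card_gt_0_iff)
  finally have "(\<Sum>i\<in>A. ln_gap c (x i)) = card A * ln c - (\<Sum>i\<in>A. ln (x i))"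
    by (simp add: ln_gap_def sum_subtractf)
  then show ?thesis unfolding c_def by simp
qed

lemma prod_le_prod_of_suffix_sums:
  fixes x y :: "nat \<Rightarrow> real"
  assumes pos: "\<And>i. 1 \<le> i \<Longrightarrow> i \<le> b \<Longrightarrow> 0 < x i \<and> 0 < y i"
    and antitone: "\<And>i. 1 \<le> i \<Longrightarrow> i < b \<Longrightarrow> x (Suc i) \<le> x i"
    and suffix: "\<And>t. 1 \<le> t \<Longrightarrow> t \<le> b \<Longrightarrow> (\<Sum>i=t..b. y i) \<le> (\<Sum>i=t..b. x i)"
  shows "(\<Prod>i=1..b. y i) \<le> (\<Prod>i=1..b. x i)"
proof -
  have x: "0 < x i" and y: "0 < y i" if "i \<in> {1..b}" for i
    using pos that by auto
  have "(\<Sum>i=1..b. 1 * ln (y i)) + (\<Sum>i=1..b. 1 * ln_gap (x i) (y i)) \<le> (\<Sum>i=1..b. 1 * ln (x i))"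
    using assms by (intro weighted_ln_sum_le) auto
  moreover have "0 \<le> (\<Sum>i=1..b. ln_gap (x i) (y i))"
    using x y by (intro sum_nonneg ln_gap_nonneg)
  moreover have "ln (\<Prod>i=1..b. x i) = (\<Sum>i=1..b. ln (x i))"
    and "ln (\<Prod>i=1..b. y i) = (\<Sum>i=1..b. ln (y i))"
    using x y by (metis (mono_tags) finite_atLeastAtMost ln_prod less_irrefl)+
  ultimately have "ln (\<Prod>i=1..b. y i) \<le> ln (\<Prod>i=1..b. x i)"
    by simp
  moreover have "0 < (\<Prod>i=1..b. x i)" "0 < (\<Prod>i=1..b. y i)"
    by (rule prod_pos, erule x y)+
  ultimately show ?thesis
    by simp
qed

lemma sum_split_at:
  fixes f :: "nat \<Rightarrow> 'a::comm_monoid_add"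
  assumes "m \<le> k" "k \<le> Suc n"
  shows "sum f {m..n} = sum f {m..<k} + sum f {k..n}"
proof -
  have "{m..n} = {m..<k} \<union> {k..n}" using assms by auto
  then show ?thesis by (simp add: sum.union_disjoint ivl_disj_int)
qed

lemma suffix_mean_le:
  fixes x :: "nat \<Rightarrow> real"
  assumes antitone: "\<And>i k. t \<le> i \<Longrightarrow> i \<le> k \<Longrightarrow> k \<le> n \<Longrightarrow> x k \<le> x i"
    and "t \<le> s" "s \<le> n"
  shows "real (Suc n - t) * (\<Sum>i=s..n. x i) \<le> real (Suc n - s) * (\<Sum>i=t..n. x i)"
proof -
  let ?A = "\<Sum>i=t..<s. x i" and ?B = "\<Sum>i=s..n. x i"
  have A: "real (s - t) * x s \<le> ?A"
    using sum_mono[of "{t..<s}" "\<lambda>_. x s" x] antitone assms by auto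
  have B: "?B \<le> real (Suc n - s) * x s"
    using sum_mono[of "{s..n}" x "\<lambda>_. x s"] antitone assms by auto
  have "real (s - t) * ?B \<le> real (s - t) * (real (Suc n - s) * x s)"
    using B by (rule mult_left_mono) simp
  also have "\<dots> = real (Suc n - s) * (real (s - t) * x s)"
    by simp
  also have "\<dots> \<le> real (Suc n - s) * ?A"
    using A by (rule mult_left_mono) simp
  finally have "real (s - t) * ?B \<le> real (Suc n - s) * ?A" .
  moreover have "(\<Sum>i=t..n. x i) = ?A + ?B"
    using assms by (intro sum_split_at) auto
  moreover have "real (Suc n - t) = real (s - t) + real (Suc n - s)"
    using assms by simp
  ultimately show ?thesis
    by (simp add: algebra_simps)
qed

section \<open>The feasible set\<close>

lemma Xset_sum: "x \<in> Xset n \<Longrightarrow> (\<Sum>i=1..n. x i) = 1"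
  unfolding Xset_def by auto

lemma Xset_prod_le_sum: "x \<in> Xset n \<Longrightarrow> 1 \<le> j \<Longrightarrow> j < n \<Longrightarrow> (\<Prod>i=1..j. x i) \<le> (\<Sum>i=Suc j..n. x i)"
  unfolding Xset_def by auto

lemma Xset_antitone:
  assumes X: "x \<in> Xset n" and "1 \<le> i" "i \<le> k" "k \<le> n"
  shows "x k \<le> x i"
  using assms(3,4)
proof (induction k rule: dec_induct)
  case (step k)
  then have "x (Suc k) \<le> x k"
    using X assms(2) unfolding Xset_def by auto
  with step show ?case by simp
qed simp

lemma Xset_pos:
  assumes X: "x \<in> Xset n" and "1 \<le> i" "i \<le> n"
  shows "0 < x i"
  using assms(2,3)
proof (induction i rule: nat_less_induct)
  case (1 i)
  have "0 < (\<Sum>k=i..n. x k)"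
  proof (cases "i = 1")
    case True
    then show ?thesis using Xset_sum[OF X] by simp
  next
    case False
    then have "0 < (\<Prod>k=1..i-1. x k)"
      using 1 by (intro prod_pos) auto
    also have "\<dots> \<le> (\<Sum>k=i..n. x k)"
      using Xset_prod_le_sum[OF X, of "i - 1"] 1 False by simp
    finally show ?thesis .
  qed
  also have "\<dots> \<le> (\<Sum>k=i..n. x i)"
    using Xset_antitone[OF X] 1 by (intro sum_mono) auto
  finally show ?case by (simp add: zero_less_mult_iff)
qed

lemma Xset_suffix_sum_ge:
  assumes X: "x \<in> Xset n" and "j < n"
  shows "sylv_rem (Suc j) \<le> (\<Sum>i=Suc j..n. x i)"
  using assms(2)
proof (induction j rule: less_induct)
  case (less j)
  show ?case
  proof (cases "j = 0")
    case True
    then show ?thesis using Xset_sum[OF X] by (simp add: sylv_rem_1)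
  next
    case False
    show ?thesis
    proof (rule ccontr)
      assume "\<not> ?thesis"
      then have short: "(\<Sum>i=Suc j..n. x i) < sylv_rem (Suc j)" by simp
      have "(\<Sum>i=t..j. 1 / real (sylv i)) \<le> (\<Sum>i=t..j. x i)" if "1 \<le> t" "t \<le> j" for t
      proof -
        have "sylv_rem t \<le> (\<Sum>i=t..n. x i)"
          using less.IH[of "t - 1"] less.prems that by simp
        also have "\<dots> = (\<Sum>i=t..j. x i) + (\<Sum>i=Suc j..n. x i)"
          using sum_split_at[of t "Suc j" n x] less.prems that
          unfolding atLeastLessThanSuc_atLeastAtMost by simp
        moreover have "(\<Sum>i=t..j. 1 / real (sylv i)) = sylv_rem t - sylv_rem (Suc j)"
          using sum_inverse_sylv[of t "Suc j"] that
          unfolding atLeastLessThanSuc_atLeastAtMost by simp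
        ultimately show ?thesis
          using short by linarith
      qed
      then have "(\<Prod>i=1..j. 1 / real (sylv i)) \<le> (\<Prod>i=1..j. x i)"
        using Xset_pos[OF X] Xset_antitone[OF X] less.prems
        by (intro prod_le_prod_of_suffix_sums) (auto simp: sylv_pos)
      also have "\<dots> \<le> (\<Sum>i=Suc j..n. x i)"
        using Xset_prod_le_sum[OF X] less.prems False by simp
      finally show False
        using short prod_inverse_sylv[of j] by linarith
    qed
  qed
qed

section \<open>The points xbar and the segments between them\<close>

definition xbar_tail :: "nat \<Rightarrow> nat \<Rightarrow> real" where
  "xbar_tail n l = sylv_rem l / real (n - l + 1)"

lemma xbar_eq: "xbar n l i = (if i < l then 1 / real (sylv i) else xbar_tail n l)"
  by (simp add: xbar_def xbar_tail_def sylv_rem_def)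

lemma xbar_tail_pos: "0 < xbar_tail n l"
  using sylv_rem_pos[of l] by (simp add: xbar_tail_def)

lemma xbar_tail_le_sylv_rem: "xbar_tail n l \<le> sylv_rem l"
  using sylv_rem_pos[of l] by (simp add: xbar_tail_def divide_le_eq)

lemma suffix_sum_xbar:
  assumes "1 \<le> t" "t \<le> l" "l \<le> n"
  shows "(\<Sum>i=t..n. xbar n l i) = sylv_rem t"
proof -
  have "(\<Sum>i=t..n. xbar n l i) = (\<Sum>i=t..<l. xbar n l i) + (\<Sum>i=l..n. xbar n l i)"
    using assms by (intro sum_split_at) auto
  also have "(\<Sum>i=t..<l. xbar n l i) = sylv_rem t - sylv_rem l"
    using assms sum_inverse_sylv[of t l] by (simp add: xbar_eq)
  also have "(\<Sum>i=l..n. xbar n l i) = sylv_rem l"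
    using assms by (simp add: xbar_eq xbar_tail_def Suc_diff_le)
  finally show ?thesis by simp
qed

lemma suffix_sum_xbar_tail:
  "l \<le> t \<Longrightarrow> (\<Sum>i=t..n. xbar n l i) = real (Suc n - t) * xbar_tail n l"
  by (simp add: xbar_eq)

lemma xbar_antitone:
  assumes "1 \<le> l" "1 \<le> i"
  shows "xbar n l (Suc i) \<le> xbar n l i"
proof -
  have "1 / real (sylv (Suc i)) \<le> 1 / real (sylv i)"
    using inverse_sylv_less_sylv_rem[of "Suc i"] sylv_rem_Suc_le[of i] assms by simp
  moreover have "xbar_tail n (Suc i) \<le> 1 / real (sylv i)"
    using xbar_tail_le_sylv_rem[of n "Suc i"] sylv_rem_Suc_le[of i] assms by simp
  ultimately show ?thesis
    by (cases "Suc i < l"; cases "Suc i = l") (auto simp: xbar_eq)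
qed

lemma xbar_pos: "0 < xbar n l i"
  using xbar_tail_pos[of n l] sylv_pos[of i] by (simp add: xbar_eq)

lemma xbar_le_1: "xbar n l i \<le> 1"
  using xbar_tail_le_sylv_rem[of n l] sylv_rem_le_1[of l] sylv_real_ge_2[of i]
  by (simp add: xbar_eq)

lemma xbar_prod_le_sum:
  assumes l: "1 \<le> l" "l \<le> n" and j: "1 \<le> j" "j < n"
  shows "(\<Prod>i=1..j. xbar n l i) \<le> (\<Sum>i=Suc j..n. xbar n l i)"
proof (cases "j < l")
  case True
  then have "(\<Prod>i=1..j. xbar n l i) = (\<Prod>i=1..j. 1 / real (sylv i))"
    by (simp add: xbar_eq)
  then show ?thesis
    using True l prod_inverse_sylv[of j] suffix_sum_xbar[of "Suc j" l n] by simp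
next
  case False
  have "{1..j} = insert j {1..<j}"
    using j by auto
  then have "(\<Prod>i=1..j. xbar n l i) = xbar n l j * (\<Prod>i=1..<j. xbar n l i)"
    by simp
  also have "\<dots> \<le> xbar n l j * 1"
    using xbar_pos xbar_le_1 by (intro mult_left_mono prod_le_1) (auto simp: less_imp_le)
  also have "\<dots> \<le> real (n - j) * xbar_tail n l"
    using False j xbar_tail_pos[of n l] by (simp add: xbar_eq)
  also have "\<dots> = (\<Sum>i=Suc j..n. xbar n l i)"
    using False suffix_sum_xbar_tail[of l "Suc j" n] by simp
  finally show ?thesis .
qed

lemma xbar_in_Xset:
  assumes "1 \<le> l" "l \<le> n"
  shows "xbar n l \<in> Xset n"
proof -
  have "(\<Sum>i=1..n. xbar n l i) = 1"
    using suffix_sum_xbar[of 1 l n] assms by (simp add: sylv_rem_1)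
  then show ?thesis
    using assms xbar_le_1[of n l 1] xbar_antitone xbar_prod_le_sum xbar_pos[of n l n]
    unfolding Xset_def by (auto simp: less_imp_le)
qed

definition log_fobj :: "nat \<Rightarrow> (nat \<Rightarrow> real) \<Rightarrow> (nat \<Rightarrow> real) \<Rightarrow> real" where
  "log_fobj n \<alpha> x = (\<Sum>i=1..n. \<alpha> i * ln (x i))"

lemma fobj_eq_exp_log_fobj:
  assumes "x \<in> Xset n"
  shows "fobj n \<alpha> x = exp (log_fobj n \<alpha> x)"
proof -
  have "x i powr \<alpha> i = exp (\<alpha> i * ln (x i))" if "i \<in> {1..n}" for i
    using Xset_pos[OF assms, of i] that by (simp add: powr_def mult.commute)
  then show ?thesis
    unfolding fobj_def log_fobj_def by (simp add: exp_sum)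
qed

lemma is_minimizer_iff_log_fobj:
  "is_minimizer n \<alpha> x \<longleftrightarrow> x \<in> Xset n \<and> (\<forall>y\<in>Xset n. log_fobj n \<alpha> x \<le> log_fobj n \<alpha> y)"
  unfolding is_minimizer_def by (auto simp: fobj_eq_exp_log_fobj)

lemma log_fobj_cong: "(\<And>i. 1 \<le> i \<Longrightarrow> i \<le> n \<Longrightarrow> x i = y i) \<Longrightarrow> log_fobj n \<alpha> x = log_fobj n \<alpha> y"
  unfolding log_fobj_def by (intro sum.cong) auto

definition xbar_seg :: "nat \<Rightarrow> nat \<Rightarrow> real \<Rightarrow> nat \<Rightarrow> real" where
  "xbar_seg n l v i =
    (if i < l then 1 / real (sylv i) else if i = l then v else (sylv_rem l - v) / real (n - l))"

lemma xbar_seg_left: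
  assumes "l < n"
  shows "xbar_seg n l (xbar_tail n l) i = xbar n l i"
proof -
  have "(r - r / (m + 1)) / m = r / (m + 1)" if "0 < m" for r m :: real
  proof -
    have "r - r / (m + 1) = r * m / (m + 1)"
      using that by (simp add: field_simps)
    then show ?thesis
      using that by simp
  qed
  moreover have "real (n - l + 1) = real (n - l) + 1" and "0 < real (n - l)"
    using assms by simp_all
  ultimately have "(sylv_rem l - xbar_tail n l) / real (n - l) = xbar_tail n l"
    unfolding xbar_tail_def by metis
  then show ?thesis
    by (simp add: xbar_seg_def xbar_eq)
qed

lemma xbar_seg_right: "1 \<le> l \<Longrightarrow> l < n \<Longrightarrow> xbar_seg n l (1 / real (sylv l)) i = xbar n (Suc l) i"
  by (cases "i < l"; cases "i = l") (auto simp: xbar_seg_def xbar_eq xbar_tail_def sylv_rem_Suc)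

lemma suffix_sum_xbar_seg:
  assumes "1 \<le> t" "t \<le> l" "l < n"
  shows "(\<Sum>i=t..n. xbar_seg n l v i) = sylv_rem t"
proof -
  have "(\<Sum>i=t..n. xbar_seg n l v i) = (\<Sum>i=t..<l. xbar_seg n l v i) + (\<Sum>i=l..n. xbar_seg n l v i)"
    using assms by (intro sum_split_at) auto
  also have "(\<Sum>i=l..n. xbar_seg n l v i) = xbar_seg n l v l + (\<Sum>i=Suc l..n. xbar_seg n l v i)"
    using assms by (intro sum.atLeast_Suc_atMost) simp
  also have "(\<Sum>i=t..<l. xbar_seg n l v i) = sylv_rem t - sylv_rem l"
    using assms sum_inverse_sylv[of t l] by (simp add: xbar_seg_def)
  also have "(\<Sum>i=Suc l..n. xbar_seg n l v i) = sylv_rem l - v"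
    using assms by (simp add: xbar_seg_def)
  finally show ?thesis by (simp add: xbar_seg_def)
qed

lemma log_fobj_xbar_seg:
  assumes "1 \<le> l" "l < n"
  obtains C where "\<And>v. v < sylv_rem l \<Longrightarrow>
    log_fobj n \<alpha> (xbar_seg n l v) = C + (\<alpha> l * ln v + (\<Sum>i=Suc l..n. \<alpha> i) * ln (sylv_rem l - v))"
proof
  fix v assume v: "v < sylv_rem l"
  let ?y = "xbar_seg n l v"
  have "log_fobj n \<alpha> ?y = (\<Sum>i=1..<l. \<alpha> i * ln (?y i)) + (\<Sum>i=l..n. \<alpha> i * ln (?y i))"
    unfolding log_fobj_def using assms by (intro sum_split_at) auto
  also have "(\<Sum>i=l..n. \<alpha> i * ln (?y i)) = \<alpha> l * ln v + (\<Sum>i=Suc l..n. \<alpha> i * ln (?y i))"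
    using assms by (subst sum.atLeast_Suc_atMost) (simp_all add: xbar_seg_def)
  also have "(\<Sum>i=1..<l. \<alpha> i * ln (?y i)) = (\<Sum>i=1..<l. \<alpha> i * ln (1 / real (sylv i)))"
    by (intro sum.cong) (simp_all add: xbar_seg_def)
  also have "(\<Sum>i=Suc l..n. \<alpha> i * ln (?y i))
      = (\<Sum>i=Suc l..n. \<alpha> i) * (ln (sylv_rem l - v) - ln (real (n - l)))"
    using assms v by (simp add: xbar_seg_def ln_div sum_distrib_right)
  finally show "log_fobj n \<alpha> ?y
      = ((\<Sum>i=1..<l. \<alpha> i * ln (1 / real (sylv i))) - (\<Sum>i=Suc l..n. \<alpha> i) * ln (real (n - l)))
        + (\<alpha> l * ln v + (\<Sum>i=Suc l..n. \<alpha> i) * ln (sylv_rem l - v))"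
    by (simp add: algebra_simps)
qed

lemma log_fobj_xbar_seg_ge_min:
  assumes l: "1 \<le> l" "l < n" and "0 \<le> \<alpha> l"
    and v: "xbar_tail n l \<le> v" "v \<le> 1 / real (sylv l)"
  shows "min (log_fobj n \<alpha> (xbar n l)) (log_fobj n \<alpha> (xbar n (Suc l))) \<le> log_fobj n \<alpha> (xbar_seg n l v)"
    and "0 < \<alpha> l \<Longrightarrow> xbar_tail n l < v \<Longrightarrow> v < 1 / real (sylv l) \<Longrightarrow>
      min (log_fobj n \<alpha> (xbar n l)) (log_fobj n \<alpha> (xbar n (Suc l))) < log_fobj n \<alpha> (xbar_seg n l v)"
proof -
  obtain C where C: "\<And>v. v < sylv_rem l \<Longrightarrow>
    log_fobj n \<alpha> (xbar_seg n l v) = C + (\<alpha> l * ln v + (\<Sum>i=Suc l..n. \<alpha> i) * ln (sylv_rem l - v))"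
    using log_fobj_xbar_seg[OF l] by blast
  have ends: "log_fobj n \<alpha> (xbar n l) = log_fobj n \<alpha> (xbar_seg n l (xbar_tail n l))"
    "log_fobj n \<alpha> (xbar n (Suc l)) = log_fobj n \<alpha> (xbar_seg n l (1 / real (sylv l)))"
    using l by (auto intro: log_fobj_cong simp: xbar_seg_left xbar_seg_right)
  have "1 / real (sylv l) < sylv_rem l"
    by (rule inverse_sylv_less_sylv_rem)
  then have "xbar_tail n l < sylv_rem l" "v < sylv_rem l"
    using v by linarith+
  note bounds = xbar_tail_pos[of n l] v this \<open>1 / real (sylv l) < sylv_rem l\<close>
  show "min (log_fobj n \<alpha> (xbar n l)) (log_fobj n \<alpha> (xbar n (Suc l))) \<le> log_fobj n \<alpha> (xbar_seg n l v)"
    using min_endpoints_le_ln_sum(1)[of "\<alpha> l" "xbar_tail n l" v "1 / real (sylv l)" "sylv_rem l"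
        "\<Sum>i=Suc l..n. \<alpha> i"] assms bounds
    unfolding ends by (simp add: C)
  show "0 < \<alpha> l \<Longrightarrow> xbar_tail n l < v \<Longrightarrow> v < 1 / real (sylv l) \<Longrightarrow>
      min (log_fobj n \<alpha> (xbar n l)) (log_fobj n \<alpha> (xbar n (Suc l))) < log_fobj n \<alpha> (xbar_seg n l v)"
    using min_endpoints_le_ln_sum(2)[of "\<alpha> l" "xbar_tail n l" v "1 / real (sylv l)" "sylv_rem l"
        "\<Sum>i=Suc l..n. \<alpha> i"] assms bounds
    unfolding ends by (simp add: C)
qed

section \<open>Domination by a point of a segment\<close>

lemma exists_bracketing_index:
  fixes f :: "nat \<Rightarrow> real"
  assumes "1 \<le> b" "c \<le> f 1" "f (Suc b) \<le> c"
  shows "\<exists>l\<in>{1..b}. f (Suc l) \<le> c \<and> c \<le> f l"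
  using assms
proof (induction b)
  case (Suc b)
  show ?case
  proof (cases "c \<le> f (Suc b)")
    case True
    with Suc.prems show ?thesis by auto
  next
    case False
    with Suc.prems have "1 \<le> b" by (cases b) auto
    with False Suc.prems Suc.IH show ?thesis by force
  qed
qed simp

lemma Xset_suffix_sum_ge_mean:
  assumes X: "x \<in> Xset n" and "1 \<le> t" "t \<le> s" "s \<le> n"
  shows "real (Suc n - t) * ((\<Sum>i=s..n. x i) / real (Suc n - s)) \<le> (\<Sum>i=t..n. x i)"
proof -
  have "real (Suc n - t) * (\<Sum>i=s..n. x i) \<le> real (Suc n - s) * (\<Sum>i=t..n. x i)"
    using Xset_antitone[OF X] assms by (intro suffix_mean_le) auto
  moreover have "0 < real (Suc n - s)"
    using assms by simp
  ultimately show ?thesis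
    by (simp add: field_simps)
qed

lemma xbar_seg_pos:
  assumes "0 < v" "v < sylv_rem l" "l < n"
  shows "0 < xbar_seg n l v i"
  using assms sylv_pos[of i] by (simp add: xbar_seg_def)

lemma exists_xbar_seg_below:
  assumes X: "x \<in> Xset n" and b: "1 \<le> b" "b < n"
  obtains l v where "1 \<le> l" "l \<le> b" "xbar_tail n l \<le> v" "v \<le> 1 / real (sylv l)"
    and "\<And>t. 1 \<le> t \<Longrightarrow> t \<le> b \<Longrightarrow> (\<Sum>i=t..n. xbar_seg n l v i) \<le> (\<Sum>i=t..n. x i)"
    and "\<And>i. l < i \<Longrightarrow> xbar_seg n l v i = (\<Sum>k=Suc b..n. x k) / real (n - b)"
proof -
  define c where "c = (\<Sum>k=Suc b..n. x k) / real (n - b)"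
  have mean: "real (Suc n - t) * c \<le> (\<Sum>i=t..n. x i)" if "1 \<le> t" "t \<le> Suc b" for t
    using Xset_suffix_sum_ge_mean[OF X that] b by (simp add: c_def)
  have "c \<le> xbar_tail n 1"
    using mean[of 1] Xset_sum[OF X] b by (simp add: xbar_tail_def sylv_rem_1 field_simps)
  moreover have "xbar_tail n (Suc b) \<le> c"
    using Xset_suffix_sum_ge[OF X b(2)] b by (simp add: xbar_tail_def c_def divide_right_mono)
  ultimately obtain l where l: "1 \<le> l" "l \<le> b" "xbar_tail n (Suc l) \<le> c" "c \<le> xbar_tail n l"
    using exists_bracketing_index[of b c "xbar_tail n"] b by auto
  define v where "v = sylv_rem l - real (n - l) * c"
  have tail: "xbar_seg n l v i = c" if "l < i" for i
    using that l b by (simp add: xbar_seg_def v_def)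
  have "real (n - l) * c \<le> real (n - l) * xbar_tail n l"
    using l by (intro mult_left_mono) auto
  then have "xbar_tail n l \<le> v"
    using l b by (simp add: v_def xbar_tail_def field_simps)
  moreover have "v \<le> 1 / real (sylv l)"
    using l b sylv_rem_Suc[of l] by (simp add: v_def xbar_tail_def field_simps)
  moreover have "(\<Sum>i=t..n. xbar_seg n l v i) \<le> (\<Sum>i=t..n. x i)" if "1 \<le> t" "t \<le> b" for t
  proof (cases "t \<le> l")
    case True
    then show ?thesis
      using suffix_sum_xbar_seg[of t l n v] Xset_suffix_sum_ge[OF X, of "t - 1"] that l b by simp
  next
    case False
    then show ?thesis
      using mean[of t] that tail by simp
  qed
  ultimately show thesis
    using that l tail unfolding c_def by blast
qed

lemma xbar_last_below:
  assumes X: "x \<in> Xset n" and "1 \<le> t" "t \<le> n"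
  shows "(\<Sum>i=t..n. xbar n n i) \<le> (\<Sum>i=t..n. x i)"
  using suffix_sum_xbar[of t n n] Xset_suffix_sum_ge[OF X, of "t - 1"] assms by simp

section \<open>Sorted exponents\<close>

locale sorted_exponents =
  fixes n b :: nat and \<alpha> :: "nat \<Rightarrow> real"
  assumes b_range: "b \<in> {1..n}"
    and head: "\<And>i j. 1 \<le> i \<Longrightarrow> i \<le> j \<Longrightarrow> j \<le> b \<Longrightarrow> 0 \<le> \<alpha> i \<and> \<alpha> i \<le> \<alpha> j"
    and tail: "\<And>i j. b < i \<Longrightarrow> i \<le> n \<Longrightarrow> b < j \<Longrightarrow> j \<le> n \<Longrightarrow> \<alpha> i = \<alpha> j \<and> \<alpha> i \<le> 0"
begin

lemma alpha_tail: "b < i \<Longrightarrow> i \<le> n \<Longrightarrow> \<alpha> i = \<alpha> (Suc b)"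
  using tail[of i "Suc b"] by simp

lemma sum_tail_alpha: "(\<Sum>i=Suc b..n. \<alpha> i * f i) = \<alpha> (Suc b) * (\<Sum>i=Suc b..n. f i)"
  unfolding sum_distrib_left
proof (rule sum.cong)
  fix i assume "i \<in> {Suc b..n}"
  then have "\<alpha> i = \<alpha> (Suc b)"
    using alpha_tail[of i] by simp
  then show "\<alpha> i * f i = \<alpha> (Suc b) * f i" by simp
qed simp

lemma log_fobj_gap_le:
  assumes X: "x \<in> Xset n"
    and y_pos: "\<And>i. 1 \<le> i \<Longrightarrow> i \<le> n \<Longrightarrow> 0 < y i"
    and suffix: "\<And>t. 1 \<le> t \<Longrightarrow> t \<le> b \<Longrightarrow> (\<Sum>i=t..n. y i) \<le> (\<Sum>i=t..n. x i)"
    and y_tail: "\<And>i. b < i \<Longrightarrow> i \<le> n \<Longrightarrow> y i = (\<Sum>k=Suc b..n. x k) / real (n - b)"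
  shows "log_fobj n \<alpha> y + (\<Sum>i=1..b. \<alpha> i * ln_gap (x i) (y i))
    - \<alpha> (Suc b) * (\<Sum>i=Suc b..n. ln_gap (y i) (x i)) \<le> log_fobj n \<alpha> x"
proof -
  have split: "log_fobj n \<alpha> z = (\<Sum>i=1..b. \<alpha> i * ln (z i)) + (\<Sum>i=Suc b..n. \<alpha> i * ln (z i))" for z
    using sum_split_at[of 1 "Suc b" n] b_range
    unfolding log_fobj_def atLeastLessThanSuc_atLeastAtMost by simp
  have tail_sums: "(\<Sum>i=Suc b..n. y i) = (\<Sum>i=Suc b..n. x i)"
    using y_tail by (cases "b < n") simp_all
  have "(\<Sum>i=t..b. y i) \<le> (\<Sum>i=t..b. x i)" if "1 \<le> t" "t \<le> b" for t
    using suffix[OF that] tail_sums sum_split_at[of t "Suc b" n x] sum_split_at[of t "Suc b" n y]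
      that b_range
    unfolding atLeastLessThanSuc_atLeastAtMost by simp
  then have head_le: "(\<Sum>i=1..b. \<alpha> i * ln (y i)) + (\<Sum>i=1..b. \<alpha> i * ln_gap (x i) (y i))
      \<le> (\<Sum>i=1..b. \<alpha> i * ln (x i))"
    using X y_pos head b_range
    by (intro weighted_ln_sum_le) (auto simp: Xset_pos Xset_antitone)
  have "(\<Sum>i=Suc b..n. \<alpha> i * ln (y i)) - \<alpha> (Suc b) * (\<Sum>i=Suc b..n. ln_gap (y i) (x i))
      = (\<Sum>i=Suc b..n. \<alpha> i * ln (x i))"
  proof (cases "b < n")
    case True
    define c where "c = (\<Sum>k=Suc b..n. x k) / real (n - b)"
    have mean: "real (n - b) * ln c = (\<Sum>i=Suc b..n. ln (x i)) + (\<Sum>i=Suc b..n. ln_gap c (x i))"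
      using sum_ln_add_ln_gap_mean[of "{Suc b..n}" x] True X by (simp add: Xset_pos c_def)
    have "(\<Sum>i=Suc b..n. ln (y i)) = real (n - b) * ln c"
      and "(\<Sum>i=Suc b..n. ln_gap (y i) (x i)) = (\<Sum>i=Suc b..n. ln_gap c (x i))"
      using y_tail[folded c_def] by simp_all
    then show ?thesis
      unfolding sum_tail_alpha mean by (simp add: algebra_simps)
  qed simp
  with split[of x] split[of y] head_le show ?thesis
    by linarith
qed

lemma log_fobj_gaps_nonneg:
  assumes X: "x \<in> Xset n" and y_pos: "\<And>i. 1 \<le> i \<Longrightarrow> i \<le> n \<Longrightarrow> 0 < y i"
  shows "0 \<le> (\<Sum>i=1..b. \<alpha> i * ln_gap (x i) (y i))"
    and "0 \<le> - \<alpha> (Suc b) * (\<Sum>i=Suc b..n. ln_gap (y i) (x i))"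
proof -
  show "0 \<le> (\<Sum>i=1..b. \<alpha> i * ln_gap (x i) (y i))"
  proof (rule sum_nonneg)
    fix i assume "i \<in> {1..b}"
    then show "0 \<le> \<alpha> i * ln_gap (x i) (y i)"
      using head[of i i] X y_pos[of i] b_range
      by (intro mult_nonneg_nonneg ln_gap_nonneg) (auto simp: Xset_pos)
  qed
  have "0 \<le> (\<Sum>i=Suc b..n. ln_gap (y i) (x i))"
    using X y_pos by (intro sum_nonneg) (simp add: Xset_pos ln_gap_nonneg)
  then show "0 \<le> - \<alpha> (Suc b) * (\<Sum>i=Suc b..n. ln_gap (y i) (x i))"
    using tail[of "Suc b" "Suc b"] by (cases "b < n") (simp_all add: mult_nonpos_nonneg)
qed

lemma log_fobj_le_of_dominated:
  assumes X: "x \<in> Xset n"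
    and y_pos: "\<And>i. 1 \<le> i \<Longrightarrow> i \<le> n \<Longrightarrow> 0 < y i"
    and suffix: "\<And>t. 1 \<le> t \<Longrightarrow> t \<le> b \<Longrightarrow> (\<Sum>i=t..n. y i) \<le> (\<Sum>i=t..n. x i)"
    and y_tail: "\<And>i. b < i \<Longrightarrow> i \<le> n \<Longrightarrow> y i = (\<Sum>k=Suc b..n. x k) / real (n - b)"
  shows "log_fobj n \<alpha> y \<le> log_fobj n \<alpha> x"
  using log_fobj_gap_le[of x y, OF X y_pos suffix y_tail] log_fobj_gaps_nonneg[of x y, OF X y_pos]
  by linarith

lemma eq_of_dominated_log_fobj_eq:
  assumes X: "x \<in> Xset n"
    and y_pos: "\<And>i. 1 \<le> i \<Longrightarrow> i \<le> n \<Longrightarrow> 0 < y i"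
    and suffix: "\<And>t. 1 \<le> t \<Longrightarrow> t \<le> b \<Longrightarrow> (\<Sum>i=t..n. y i) \<le> (\<Sum>i=t..n. x i)"
    and y_tail: "\<And>i. b < i \<Longrightarrow> i \<le> n \<Longrightarrow> y i = (\<Sum>k=Suc b..n. x k) / real (n - b)"
    and \<alpha>_pos: "\<And>i. 1 \<le> i \<Longrightarrow> i \<le> b \<Longrightarrow> 0 < \<alpha> i"
    and \<alpha>_neg: "Suc b < n \<Longrightarrow> \<alpha> (Suc b) < 0"
    and eq: "log_fobj n \<alpha> y = log_fobj n \<alpha> x"
  shows "\<forall>i\<in>{1..n}. x i = y i"
proof -
  have head_zero: "(\<Sum>i=1..b. \<alpha> i * ln_gap (x i) (y i)) = 0"
    and tail_zero: "\<alpha> (Suc b) * (\<Sum>i=Suc b..n. ln_gap (y i) (x i)) = 0"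
    using log_fobj_gap_le[of x y, OF X y_pos suffix y_tail] log_fobj_gaps_nonneg[of x y, OF X y_pos] eq
    by linarith+
  have gap_eq_0: "ln_gap u v = 0 \<Longrightarrow> u = v" if "0 < u" "0 < v" for u v
    using ln_gap_eq_0_iff[OF that] by blast
  have "x i = y i" if "i \<in> {1..b}" for i
  proof -
    have "\<alpha> i * ln_gap (x i) (y i) = 0"
      using head_zero head X y_pos b_range that
      by (subst (asm) sum_nonneg_eq_0_iff) (auto simp: Xset_pos ln_gap_nonneg)
    then show ?thesis
      using that X y_pos[of i] \<alpha>_pos[of i] b_range by (auto intro: gap_eq_0 simp: Xset_pos)
  qed
  moreover have "x i = y i" if "b < i" "i \<le> n" for i
  proof (cases "Suc b < n")
    case True
    then have "(\<Sum>i=Suc b..n. ln_gap (y i) (x i)) = 0"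
      using tail_zero \<alpha>_neg by simp
    then have "ln_gap (y i) (x i) = 0"
      using that X y_pos by (subst (asm) sum_nonneg_eq_0_iff) (auto simp: Xset_pos ln_gap_nonneg)
    then show ?thesis
      using that X y_pos[of i] by (auto intro: gap_eq_0[symmetric] simp: Xset_pos)
  next
    case False
    with that have "i = n" "b = n - 1" by auto
    then show ?thesis
      using y_tail[OF that] that by simp
  qed
  ultimately show ?thesis
    by (meson atLeastAtMost_iff not_le)
qed

lemma exists_dominating_xbar_seg:
  assumes "b < n" and X: "x \<in> Xset n"
  obtains l v where "1 \<le> l" "l \<le> b" "xbar_tail n l \<le> v" "v \<le> 1 / real (sylv l)"
    and "log_fobj n \<alpha> (xbar_seg n l v) \<le> log_fobj n \<alpha> x"
    and "(\<And>i. 1 \<le> i \<Longrightarrow> i \<le> b \<Longrightarrow> 0 < \<alpha> i) \<Longrightarrow> (Suc b < n \<Longrightarrow> \<alpha> (Suc b) < 0) \<Longrightarrow>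
      log_fobj n \<alpha> (xbar_seg n l v) = log_fobj n \<alpha> x \<Longrightarrow> \<forall>i\<in>{1..n}. x i = xbar_seg n l v i"
proof -
  obtain l v where l: "1 \<le> l" "l \<le> b" and v: "xbar_tail n l \<le> v" "v \<le> 1 / real (sylv l)"
    and suffix: "\<And>t. 1 \<le> t \<Longrightarrow> t \<le> b \<Longrightarrow> (\<Sum>i=t..n. xbar_seg n l v i) \<le> (\<Sum>i=t..n. x i)"
    and tail: "\<And>i. l < i \<Longrightarrow> xbar_seg n l v i = (\<Sum>k=Suc b..n. x k) / real (n - b)"
    using exists_xbar_seg_below[OF X _ \<open>b < n\<close>] b_range by (metis atLeastAtMost_iff)
  have "0 < v" "v < sylv_rem l"
    using v xbar_tail_pos[of n l] inverse_sylv_less_sylv_rem[of l] by linarith+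
  then have pos: "0 < xbar_seg n l v i" for i
    using l \<open>b < n\<close> by (intro xbar_seg_pos) auto
  have tail': "xbar_seg n l v i = (\<Sum>k=Suc b..n. x k) / real (n - b)" if "b < i" for i
    using tail l that by simp
  show thesis
    by (rule that[OF l v log_fobj_le_of_dominated[of x "xbar_seg n l v", OF X pos suffix tail']
          eq_of_dominated_log_fobj_eq[of x "xbar_seg n l v", OF X pos suffix tail']])
qed

lemma xbar_last_dominates:
  assumes "b = n" and X: "x \<in> Xset n"
  shows "log_fobj n \<alpha> (xbar n n) \<le> log_fobj n \<alpha> x"
    and "(\<And>i. 1 \<le> i \<Longrightarrow> i \<le> b \<Longrightarrow> 0 < \<alpha> i) \<Longrightarrow>
      log_fobj n \<alpha> (xbar n n) = log_fobj n \<alpha> x \<Longrightarrow> \<forall>i\<in>{1..n}. x i = xbar n n i"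
proof -
  have suffix: "(\<Sum>i=t..n. xbar n n i) \<le> (\<Sum>i=t..n. x i)" if "1 \<le> t" "t \<le> b" for t
    using xbar_last_below[OF X] that \<open>b = n\<close> by simp
  have tail: "xbar n n i = (\<Sum>k=Suc b..n. x k) / real (n - b)" if "b < i" "i \<le> n" for i
    using that \<open>b = n\<close> by simp
  show "log_fobj n \<alpha> (xbar n n) \<le> log_fobj n \<alpha> x"
    by (rule log_fobj_le_of_dominated[of x "xbar n n", OF X xbar_pos suffix tail])
  show "(\<And>i. 1 \<le> i \<Longrightarrow> i \<le> b \<Longrightarrow> 0 < \<alpha> i) \<Longrightarrow>
      log_fobj n \<alpha> (xbar n n) = log_fobj n \<alpha> x \<Longrightarrow> \<forall>i\<in>{1..n}. x i = xbar n n i"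
    using eq_of_dominated_log_fobj_eq[of x "xbar n n", OF X xbar_pos suffix tail] \<open>b = n\<close> by simp
qed

lemma exists_xbar_le_log_fobj:
  assumes X: "x \<in> Xset n"
  shows "\<exists>l\<in>{1..n}. log_fobj n \<alpha> (xbar n l) \<le> log_fobj n \<alpha> x"
proof (cases "b < n")
  case True
  obtain l v where l: "1 \<le> l" "l \<le> b" and v: "xbar_tail n l \<le> v" "v \<le> 1 / real (sylv l)"
    and le: "log_fobj n \<alpha> (xbar_seg n l v) \<le> log_fobj n \<alpha> x"
    by (rule exists_dominating_xbar_seg[OF True X])
  have "min (log_fobj n \<alpha> (xbar n l)) (log_fobj n \<alpha> (xbar n (Suc l))) \<le> log_fobj n \<alpha> (xbar_seg n l v)"
    using l True head[of l l] v by (intro log_fobj_xbar_seg_ge_min(1)) auto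
  with le have "log_fobj n \<alpha> (xbar n l) \<le> log_fobj n \<alpha> x \<or> log_fobj n \<alpha> (xbar n (Suc l)) \<le> log_fobj n \<alpha> x"
    by linarith
  moreover have "l \<in> {1..n}" "Suc l \<in> {1..n}"
    using l True by auto
  ultimately show ?thesis
    by blast
next
  case False
  with b_range have "b = n" by simp
  then show ?thesis
    using xbar_last_dominates(1)[OF _ X] b_range by auto
qed

lemma inY_of_le_all_xbar:
  assumes \<alpha>_pos: "\<And>i. 1 \<le> i \<Longrightarrow> i \<le> b \<Longrightarrow> 0 < \<alpha> i"
    and \<alpha>_neg: "Suc b < n \<Longrightarrow> \<alpha> (Suc b) < 0"
    and X: "x \<in> Xset n"
    and min: "\<And>l. 1 \<le> l \<Longrightarrow> l \<le> n \<Longrightarrow> log_fobj n \<alpha> x \<le> log_fobj n \<alpha> (xbar n l)"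
  shows "inY n x"
proof (cases "b < n")
  case True
  obtain l v where l: "1 \<le> l" "l \<le> b" and v: "xbar_tail n l \<le> v" "v \<le> 1 / real (sylv l)"
    and le: "log_fobj n \<alpha> (xbar_seg n l v) \<le> log_fobj n \<alpha> x"
    and eq: "(\<And>i. 1 \<le> i \<Longrightarrow> i \<le> b \<Longrightarrow> 0 < \<alpha> i) \<Longrightarrow> (Suc b < n \<Longrightarrow> \<alpha> (Suc b) < 0) \<Longrightarrow>
      log_fobj n \<alpha> (xbar_seg n l v) = log_fobj n \<alpha> x \<Longrightarrow> \<forall>i\<in>{1..n}. x i = xbar_seg n l v i"
    using exists_dominating_xbar_seg[OF True X] by blast
  let ?m = "min (log_fobj n \<alpha> (xbar n l)) (log_fobj n \<alpha> (xbar n (Suc l)))"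
  have "log_fobj n \<alpha> x \<le> ?m"
    using min[of l] min[of "Suc l"] l True by simp
  moreover have "?m \<le> log_fobj n \<alpha> (xbar_seg n l v)"
    and strict: "xbar_tail n l < v \<Longrightarrow> v < 1 / real (sylv l) \<Longrightarrow> ?m < log_fobj n \<alpha> (xbar_seg n l v)"
    using l True \<alpha>_pos[of l] v log_fobj_xbar_seg_ge_min[of l n \<alpha> v] by simp_all
  ultimately have "log_fobj n \<alpha> (xbar_seg n l v) = log_fobj n \<alpha> x"
    and "v = xbar_tail n l \<or> v = 1 / real (sylv l)"
    using le v by linarith+
  then have "(\<forall>i\<in>{1..n}. x i = xbar n l i) \<or> (\<forall>i\<in>{1..n}. x i = xbar n (Suc l) i)"
    using eq[OF \<alpha>_pos \<alpha>_neg] l True by (auto simp: xbar_seg_left xbar_seg_right)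
  moreover have "l \<in> {1..n}" "Suc l \<in> {1..n}"
    using l True by auto
  ultimately show ?thesis
    unfolding inY_def by blast
next
  case False
  with b_range have "b = n" by simp
  then have "\<forall>i\<in>{1..n}. x i = xbar n n i"
    using xbar_last_dominates[OF _ X] min[of n] \<alpha>_pos b_range by force
  then show ?thesis
    unfolding inY_def using b_range by auto
qed

lemma exists_minimizer_in_Y: "\<exists>x. is_minimizer n \<alpha> x \<and> inY n x"
proof -
  obtain l0 where "is_arg_min (\<lambda>l. log_fobj n \<alpha> (xbar n l)) (\<lambda>l. l \<in> {1..n}) l0"
    using ex_is_arg_min_if_finite[of "{1..n}" "\<lambda>l. log_fobj n \<alpha> (xbar n l)"] b_range by auto
  then have l0: "l0 \<in> {1..n}"
    and least: "\<And>l. l \<in> {1..n} \<Longrightarrow> log_fobj n \<alpha> (xbar n l0) \<le> log_fobj n \<alpha> (xbar n l)"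
    by (auto simp: is_arg_min_def not_less)
  have "log_fobj n \<alpha> (xbar n l0) \<le> log_fobj n \<alpha> y" if Y: "y \<in> Xset n" for y
  proof -
    obtain l where "l \<in> {1..n}" "log_fobj n \<alpha> (xbar n l) \<le> log_fobj n \<alpha> y"
      using exists_xbar_le_log_fobj[OF Y] by blast
    with least show ?thesis by force
  qed
  moreover have "xbar n l0 \<in> Xset n" "inY n (xbar n l0)"
    using l0 xbar_in_Xset unfolding inY_def by auto
  ultimately show ?thesis
    unfolding is_minimizer_iff_log_fobj by blast
qed

lemma minimizer_in_Y:
  assumes "\<And>i. 1 \<le> i \<Longrightarrow> i \<le> b \<Longrightarrow> 0 < \<alpha> i" and "Suc b < n \<Longrightarrow> \<alpha> (Suc b) < 0"
    and "is_minimizer n \<alpha> x"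
  shows "inY n x"
proof (rule inY_of_le_all_xbar)
  show "x \<in> Xset n" "\<And>l. 1 \<le> l \<Longrightarrow> l \<le> n \<Longrightarrow> log_fobj n \<alpha> x \<le> log_fobj n \<alpha> (xbar n l)"
    using assms(3) xbar_in_Xset unfolding is_minimizer_iff_log_fobj by auto
qed (fact assms)+

end

theorem mainTheorem12:
  fixes n b :: nat and \<alpha> :: "nat \<Rightarrow> real"
  assumes "n \<ge> 2" and "b \<in> {1..n}"
    and "\<And>i j. 1 \<le> i \<Longrightarrow> i \<le> j \<Longrightarrow> j \<le> b \<Longrightarrow> 0 \<le> \<alpha> i \<and> \<alpha> i \<le> \<alpha> j"
    and "\<And>i j. b < i \<Longrightarrow> i \<le> n \<Longrightarrow> b < j \<Longrightarrow> j \<le> n \<Longrightarrow> \<alpha> i = \<alpha> j \<and> \<alpha> i \<le> 0"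
  shows "(\<exists>x. is_minimizer n \<alpha> x \<and> inY n x)
    \<and> ((\<forall>i\<in>{1..n}. \<alpha> i \<noteq> 0) \<longrightarrow> (\<forall>x. is_minimizer n \<alpha> x \<longrightarrow> inY n x))
    \<and> ((b = n - 1 \<and> (\<forall>i\<in>{1..<n}. 0 < \<alpha> i) \<and> \<alpha> n = 0)
         \<longrightarrow> (\<forall>x. is_minimizer n \<alpha> x \<longrightarrow> inY n x))"
proof -
  interpret sorted_exponents n b \<alpha>
    using assms(2-4) by unfold_locales
  have part_b: "inY n x" if nz: "\<forall>i\<in>{1..n}. \<alpha> i \<noteq> 0" and "is_minimizer n \<alpha> x" for x
  proof (rule minimizer_in_Y)
    show "0 < \<alpha> i" if "1 \<le> i" "i \<le> b" for i
      using head[of i i] nz that b_range by (force simp: less_le)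
    show "\<alpha> (Suc b) < 0" if "Suc b < n"
      using tail[of "Suc b" "Suc b"] nz that by (force simp: less_le)
  qed fact
  have part_c: "inY n x" if "b = n - 1" "\<forall>i\<in>{1..<n}. 0 < \<alpha> i" "is_minimizer n \<alpha> x" for x
    by (rule minimizer_in_Y) (use that in auto)
  show ?thesis
    using exists_minimizer_in_Y part_b part_c by blast
qed

end
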